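(* Let $A$ be a 0-dialgebra with involution over a field $\mathbb{F}$. On the vector space $A\oplus A$ define $(a,b)\dashv(c,d)=(a\dashv c-d\vdash b^\ast,\; a^\ast\dashv d+c\vdash b)$, $(a,b)\vdash(c,d)=(a\vdash c-d\dashv b^\ast,\; a^\ast\vdash d+c\dashv b)$ and $(a,b)^\ast=(a^\ast,-b)$. Then $A\oplus A$ with these operations is a 0-dialgebra with involution.
   Context: A 0-dialgebra is a vector space with two bilinear operations $\dashv,\vdash$ satisfying the bar identities $a\dashv(b\dashv c)=a\dashv(b\vdash c)$ and $(a\dashv b)\vdash c=(a\vdash b)\vdash c$ for all $a,b,c$. A 0-dialgebra with involution is a 0-dialgebra with a linear map $a\mapsto a^\ast$ such that $(a^\ast)^\ast=a$, $(a\dashv b)^\ast=b^\ast\vdash a^\ast$ and $(a\vdash b)^\ast=b^\ast\dashv a^\ast$ for all $a,b$. *)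

theory Defs
  imports Main "HOL.Vector_Spaces" "HOL-Library.Product_Plus"
begin

definition bilinear_op :: "('f::field \<Rightarrow> 'v::ab_group_add \<Rightarrow> 'v) \<Rightarrow> ('v \<Rightarrow> 'v \<Rightarrow> 'v) \<Rightarrow> bool" where
  "bilinear_op s m \<longleftrightarrow> (\<forall>b. Vector_Spaces.linear s s (\<lambda>a. m a b)) \<and> (\<forall>a. Vector_Spaces.linear s s (\<lambda>b. m a b))"

definition zero_dialgebra :: "('f::field \<Rightarrow> 'v::ab_group_add \<Rightarrow> 'v) \<Rightarrow> ('v \<Rightarrow> 'v \<Rightarrow> 'v) \<Rightarrow> ('v \<Rightarrow> 'v \<Rightarrow> 'v) \<Rightarrow> bool" where
  "zero_dialgebra s l r \<longleftrightarrow> vector_space s \<and> bilinear_op s l \<and> bilinear_op s r \<and>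
     (\<forall>a b c. l a (l b c) = l a (r b c)) \<and> (\<forall>a b c. r (l a b) c = r (r a b) c)"

text \<open>l m n = m \<dashv> n (left product), r m n = m \<turnstile> n (right product).\<close>

definition zero_dialgebra_inv :: "('f::field \<Rightarrow> 'v::ab_group_add \<Rightarrow> 'v) \<Rightarrow> ('v \<Rightarrow> 'v \<Rightarrow> 'v) \<Rightarrow> ('v \<Rightarrow> 'v \<Rightarrow> 'v) \<Rightarrow> ('v \<Rightarrow> 'v) \<Rightarrow> bool" where
  "zero_dialgebra_inv s l r star \<longleftrightarrow> zero_dialgebra s l r \<and> Vector_Spaces.linear s s star \<and>
     (\<forall>a. star (star a) = a) \<and> (\<forall>a b. star (l a b) = r (star b) (star a)) \<and> (\<forall>a b. star (r a b) = l (star b) (star a))"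

definition dbl_scale :: "('f \<Rightarrow> 'v \<Rightarrow> 'v) \<Rightarrow> 'f \<Rightarrow> 'v \<times> 'v \<Rightarrow> 'v \<times> 'v" where
  "dbl_scale s c p = (s c (fst p), s c (snd p))"

definition dbl_left :: "('v::ab_group_add \<Rightarrow> 'v \<Rightarrow> 'v) \<Rightarrow> ('v \<Rightarrow> 'v \<Rightarrow> 'v) \<Rightarrow> ('v \<Rightarrow> 'v) \<Rightarrow> 'v \<times> 'v \<Rightarrow> 'v \<times> 'v \<Rightarrow> 'v \<times> 'v" where
  "dbl_left l r star p q = (case p of (a, b) \<Rightarrow> case q of (c, d) \<Rightarrow>
      (l a c - r d (star b), l (star a) d + r c b))"

definition dbl_right :: "('v::ab_group_add \<Rightarrow> 'v \<Rightarrow> 'v) \<Rightarrow> ('v \<Rightarrow> 'v \<Rightarrow> 'v) \<Rightarrow> ('v \<Rightarrow> 'v) \<Rightarrow> 'v \<times> 'v \<Rightarrow> 'v \<times> 'v \<Rightarrow> 'v \<times> 'v" where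
  "dbl_right l r star p q = (case p of (a, b) \<Rightarrow> case q of (c, d) \<Rightarrow>
      (r a c - l d (star b), r (star a) d + l c b))"

definition dbl_inv :: "('v::ab_group_add \<Rightarrow> 'v) \<Rightarrow> 'v \<times> 'v \<Rightarrow> 'v \<times> 'v" where
  "dbl_inv star p = (star (fst p), - snd p)"

end

theory Submission
  imports Defs
begin

text \<open>This is a Cayley--Dickson type doubling. For the
  bar identities, both sides expand biadditively into the same number of terms, which match in
  pairs by a bar identity of \<open>A\<close>; in the terms where an inner product passes through \<open>\<ast>\<close>, the
  anti-automorphism property first turns \<open>(x \<dashv> y)\<^sup>\<ast>\<close> into \<open>y\<^sup>\<ast> \<turnstile> x\<^sup>\<ast>\<close>.\<close>

lemma bilinear_op_linear_left:
  "bilinear_op s m \<Longrightarrow> Vector_Spaces.linear s s (\<lambda>x. m x y)"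
  and bilinear_op_linear_right:
  "bilinear_op s m \<Longrightarrow> Vector_Spaces.linear s s (\<lambda>y. m x y)"
  by (simp_all add: bilinear_op_def)

lemma linear_simps:
  assumes "Vector_Spaces.linear s s' f"
  shows "f (x + y) = f x + f y" "f (- x) = - f x" "f (x - y) = f x - f y" "f (s c x) = s' c (f x)"
proof -
  have "module_hom s s' f" using assms by (simp add: module_hom_iff_linear)
  then show "f (x + y) = f x + f y" "f (- x) = - f x" "f (x - y) = f x - f y" "f (s c x) = s' c (f x)"
    by (fact module_hom.add module_hom.neg module_hom.diff module_hom.scale)+
qed

lemma vector_space_scale_simps:
  assumes "vector_space s"
  shows "s c (x + y) = s c x + s c y" "s c (- x) = - s c x" "s c (x - y) = s c x - s c y"
proof -
  have "module s" using assms by (simp add: module_iff_vector_space)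
  then show "s c (x + y) = s c x + s c y" "s c (- x) = - s c x" "s c (x - y) = s c x - s c y"
    by (fact module.scale_right_distrib module.scale_minus_right module.scale_right_diff_distrib)+
qed

lemma bilinear_op_simps:
  assumes "bilinear_op s m"
  shows "m (x + y) z = m x z + m y z" "m (- x) z = - m x z" "m (x - y) z = m x z - m y z"
    and "m z (x + y) = m z x + m z y" "m z (- x) = - m z x" "m z (x - y) = m z x - m z y"
    and "m (s c x) z = s c (m x z)" "m z (s c x) = s c (m z x)"
  using linear_simps[OF bilinear_op_linear_left[OF assms, of z]]
    linear_simps[OF bilinear_op_linear_right[OF assms, of z]]
  by simp_all

lemma vector_space_dbl_scale:
  "vector_space s \<Longrightarrow> vector_space (dbl_scale s)"
  by (simp add: vector_space_def dbl_scale_def)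

lemma linear_dbl_inv:
  assumes "Vector_Spaces.linear s s star"
  shows "Vector_Spaces.linear (dbl_scale s) (dbl_scale s) (dbl_inv star)"
proof -
  have vs: "vector_space s" using assms by (simp add: linear_iff)
  then show ?thesis
    using linear_simps[OF assms] vector_space_scale_simps[OF vs]
    by (simp add: linear_iff vector_space_dbl_scale dbl_inv_def dbl_scale_def)
qed

lemma dbl_right_eq_dbl_left: "dbl_right l r star = dbl_left r l star"
  by (simp add: fun_eq_iff dbl_left_def dbl_right_def)

lemma bilinear_op_dbl_left:
  assumes "bilinear_op s l" "bilinear_op s r" "Vector_Spaces.linear s s star"
  shows "bilinear_op (dbl_scale s) (dbl_left l r star)"
proof -
  have vs: "vector_space s" using assms(3) by (simp add: linear_iff)
  show ?thesis
    unfolding bilinear_op_def linear_iff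
    using vs bilinear_op_simps[OF assms(1)] bilinear_op_simps[OF assms(2)]
      linear_simps[OF assms(3)]
      vector_space_scale_simps[OF vs]
    by (auto simp: vector_space_dbl_scale dbl_left_def dbl_scale_def algebra_simps)
qed

lemma dbl_bar_identities:
  assumes "zero_dialgebra_inv s l r star"
  shows "dbl_left l r star p (dbl_left l r star q u) = dbl_left l r star p (dbl_right l r star q u)"
    and "dbl_right l r star (dbl_left l r star p q) u = dbl_right l r star (dbl_right l r star p q) u"
proof -
  have l: "bilinear_op s l" and r: "bilinear_op s r"
    and bar_left: "\<And>a b c. l a (l b c) = l a (r b c)"
    and bar_right: "\<And>a b c. r (l a b) c = r (r a b) c"
    and star: "Vector_Spaces.linear s s star"
    and star_l: "\<And>a b. star (l a b) = r (star b) (star a)"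
    and star_r: "\<And>a b. star (r a b) = l (star b) (star a)"
    using assms by (simp_all add: zero_dialgebra_inv_def zero_dialgebra_def)
  obtain a b c d e f where "p = (a, b)" "q = (c, d)" "u = (e, f)" by (cases p, cases q, cases u)
  then show "dbl_left l r star p (dbl_left l r star q u) = dbl_left l r star p (dbl_right l r star q u)"
    and "dbl_right l r star (dbl_left l r star p q) u = dbl_right l r star (dbl_right l r star p q) u"
    by (simp_all add: dbl_left_def dbl_right_def bilinear_op_simps[OF l] bilinear_op_simps[OF r]
        linear_simps[OF star] star_l star_r bar_left bar_right)
qed

lemma dbl_inv_involution:
  assumes "zero_dialgebra_inv s l r star"
  shows "dbl_inv star (dbl_inv star p) = p"
    and "dbl_inv star (dbl_left l r star p q) = dbl_right l r star (dbl_inv star q) (dbl_inv star p)"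
    and "dbl_inv star (dbl_right l r star p q) = dbl_left l r star (dbl_inv star q) (dbl_inv star p)"
proof -
  have l: "bilinear_op s l" and r: "bilinear_op s r"
    and star: "Vector_Spaces.linear s s star"
    and star_star: "\<And>a. star (star a) = a"
    and star_l: "\<And>a b. star (l a b) = r (star b) (star a)"
    and star_r: "\<And>a b. star (r a b) = l (star b) (star a)"
    using assms by (simp_all add: zero_dialgebra_inv_def zero_dialgebra_def)
  obtain a b c d where "p = (a, b)" "q = (c, d)" by (cases p, cases q)
  then show "dbl_inv star (dbl_inv star p) = p"
    and "dbl_inv star (dbl_left l r star p q) = dbl_right l r star (dbl_inv star q) (dbl_inv star p)"
    and "dbl_inv star (dbl_right l r star p q) = dbl_left l r star (dbl_inv star q) (dbl_inv star p)"
    by (simp_all add: dbl_inv_def dbl_left_def dbl_right_def bilinear_op_simps[OF l]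
        bilinear_op_simps[OF r] linear_simps[OF star] star_star star_l star_r)
qed

theorem proposition3p6:
  fixes s :: "'f::field \<Rightarrow> 'v::ab_group_add \<Rightarrow> 'v"
    and l r :: "'v \<Rightarrow> 'v \<Rightarrow> 'v" and star :: "'v \<Rightarrow> 'v"
  assumes "zero_dialgebra_inv s l r star"
  shows "zero_dialgebra_inv (dbl_scale s) (dbl_left l r star) (dbl_right l r star) (dbl_inv star)"
proof -
  have l: "bilinear_op s l" and r: "bilinear_op s r" and vs: "vector_space s"
    and star: "Vector_Spaces.linear s s star"
    using assms by (simp_all add: zero_dialgebra_inv_def zero_dialgebra_def)
  have "bilinear_op (dbl_scale s) (dbl_left l r star)"
    and "bilinear_op (dbl_scale s) (dbl_right l r star)"
    using bilinear_op_dbl_left[OF l r star] bilinear_op_dbl_left[OF r l star]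
    by (simp_all add: dbl_right_eq_dbl_left)
  then show ?thesis
    unfolding zero_dialgebra_inv_def zero_dialgebra_def
    using vector_space_dbl_scale[OF vs] linear_dbl_inv[OF star]
      dbl_bar_identities[OF assms] dbl_inv_involution[OF assms]
    by blast
qed

end
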